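(* Let $S\subset\mathbf{P}^4$ be an irreducible developable ruled surface, i.e. either the tangent developable surface of a curve or a cone with a point as vertex over a curve, which is not a plane. Let $\pi\subset\mathbf{P}^4$ be a plane such that every tangent plane of $S$ meets $\pi$ in a line. Then $S$ is contained in a hyperplane of $\mathbf{P}^4$ that contains $\pi$.
   Context: Work over $\mathbf{C}$. The tangent plane of a developable ruled surface is constant along each generator. For the tangent developable of a curve $C$, the tangent plane along the tangent line at a point of $C$ is the osculating plane of $C$ there. For a cone with vertex $O$, the tangent plane along the generator $\langle O,x\rangle$ is spanned by $O$ and the tangent line at $x$ of a directrix curve. *)

theory Defs
  imports "HOL-Complex_Analysis.Complex_Analysis"
begin

text \<open>Projective 4-space P^4 over C is modelled by C^5 = complex^5; a projective
linear subspace of projective dimension k is a complex linear subspace of C^5 of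
dimension k+1 (vec.subspace / vec.dim, complex scalars).  A set of points of P^4
is modelled by its affine cone in C^5.\<close>

definition proj_plane :: "(complex^5) set \<Rightarrow> bool" where
  "proj_plane P \<longleftrightarrow> vec.subspace P \<and> vec.dim P = 3"

definition proj_line :: "(complex^5) set \<Rightarrow> bool" where
  "proj_line L \<longleftrightarrow> vec.subspace L \<and> vec.dim L = 2"

definition proj_hyperplane :: "(complex^5) set \<Rightarrow> bool" where
  "proj_hyperplane H \<longleftrightarrow> vec.subspace H \<and> vec.dim H = 4"

definition vderiv :: "(complex \<Rightarrow> complex^'n) \<Rightarrow> complex \<Rightarrow> complex^'n" where
  "vderiv g t = (\<chi> i. deriv (\<lambda>s. g s $ i) t)"

definition holo_curve :: "(complex \<Rightarrow> complex^'n) \<Rightarrow> complex set \<Rightarrow> bool" where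
  "holo_curve g U \<longleftrightarrow> (\<forall>i. (\<lambda>s. g s $ i) holomorphic_on U)"

text \<open>Tangent developable of the curve g (parameter domain U): union of the tangent
lines; its tangent plane along the tangent line at g t is the osculating plane.\<close>
definition tdev_surface :: "(complex \<Rightarrow> complex^5) \<Rightarrow> complex set \<Rightarrow> (complex^5) set" where
  "tdev_surface g U = (\<Union>t\<in>U. vec.span {g t, vderiv g t})"

definition tdev_tplane :: "(complex \<Rightarrow> complex^5) \<Rightarrow> complex \<Rightarrow> (complex^5) set" where
  "tdev_tplane g t = vec.span {g t, vderiv g t, vderiv (vderiv g) t}"

definition cone_surface :: "complex^5 \<Rightarrow> (complex \<Rightarrow> complex^5) \<Rightarrow> complex set \<Rightarrow> (complex^5) set" where
  "cone_surface v g U = (\<Union>t\<in>U. vec.span {v, g t})"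

definition cone_tplane :: "complex^5 \<Rightarrow> (complex \<Rightarrow> complex^5) \<Rightarrow> complex \<Rightarrow> (complex^5) set" where
  "cone_tplane v g t = vec.span {v, g t, vderiv g t}"

end

theory Submission
  imports Defs
begin

text \<open>Write the plane \<open>P\<close> as the common zero set of two linear forms \<open>c\<close>, \<open>d\<close>. A tangent
plane \<open>T\<close> meets \<open>P\<close> in a line, so \<open>T + P\<close> is only a hyperplane and \<open>(c, d)\<close> has rank one
on \<open>T\<close>: \<open>c x * d y = d x * c y\<close> for \<open>x, y \<in> T\<close>. Since \<open>g t\<close> and \<open>g' t\<close> lie in the tangent
plane at \<open>t\<close>, the Wronskian of \<open>c \<circ> g\<close> and \<open>d \<circ> g\<close> vanishes, so these holomorphic
functions are proportional on the connected domain. Hence for \<open>w = g t\<^sub>0 \<notin> P\<close> the curve lies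
in the hyperplane spanned by \<open>w\<close> and \<open>P\<close>; so does its derivative, and so does the whole
tangent plane at \<open>t\<^sub>0\<close>, which contains the vertex of a cone. If the curve lies in \<open>P\<close>,
any point outside \<open>P\<close> of any tangent plane serves as \<open>w\<close>.\<close>

abbreviation linear_form :: "('a::field^'n \<Rightarrow> 'a) \<Rightarrow> bool" where
  "linear_form c \<equiv> Vector_Spaces.linear (*s) (*) c"

lemma codim2_subspace_basis_extension:
  fixes P :: "('a::field^'n) set"
  assumes "vec.subspace P" and "vec.dim P + 2 = CARD('n)"
  obtains B e1 e2 where "vec.span B = P" "e1 \<notin> B" "e2 \<notin> B" "e1 \<noteq> e2"
    "vec.independent (insert e1 (insert e2 B))" "vec.span (insert e1 (insert e2 B)) = UNIV"
proof -
  obtain B where B: "B \<subseteq> P" "vec.independent B" "vec.span B = P" "card B = vec.dim P"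
    using vec.basis_exists[of P] vec.span_subspace[OF _ _ assms(1)] by metis
  define E where "E = vec.extend_basis B"
  have E: "B \<subseteq> E" "vec.independent E" "vec.span E = UNIV"
    unfolding E_def using B(2) vec.extend_basis_superset vec.independent_extend_basis
      vec.span_extend_basis by auto
  have "finite E" using E(2) vec.finiteI_independent by blast
  have "card E = CARD('n)"
    using vec.dim_eq_card_independent[OF E(2)] E(3) vec.dim_span[of E]
      vec_dim_card[where 'a='a and 'n='n] by simp
  then have "card (E - B) = 2"
    using assms(2) B(4) E(1) \<open>finite E\<close> by (simp add: card_Diff_subset finite_subset)
  then obtain e1 e2 where "E - B = {e1, e2}" "e1 \<noteq> e2" by (auto simp: card_2_iff)
  moreover from this E(1) have "E = insert e1 (insert e2 B)" by blast
  ultimately show thesis using B(3) E(2,3) by (intro that) auto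
qed

lemma codim2_subspace_eq_common_kernel:
  fixes P :: "('a::field^'n) set"
  assumes "vec.subspace P" and "vec.dim P + 2 = CARD('n)"
  obtains c d where "linear_form c" "linear_form d" "\<And>x. x \<in> P \<longleftrightarrow> c x = 0 \<and> d x = 0"
proof -
  interpret forms: vector_space_pair "(*s) :: 'a \<Rightarrow> 'a^'n \<Rightarrow> 'a^'n" "(*) :: 'a \<Rightarrow> 'a \<Rightarrow> 'a"
    by unfold_locales
  obtain B e1 e2 where B: "vec.span B = P" "e1 \<notin> B" "e2 \<notin> B" "e1 \<noteq> e2"
    and E: "vec.independent (insert e1 (insert e2 B))" "vec.span (insert e1 (insert e2 B)) = UNIV"
    using codim2_subspace_basis_extension[OF assms] by blast
  define c where "c = forms.construct (insert e1 (insert e2 B)) (\<lambda>x. if x = e1 then 1 else 0)"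
  define d where "d = forms.construct (insert e1 (insert e2 B)) (\<lambda>x. if x = e2 then 1 else 0)"
  have lin: "linear_form c" "linear_form d"
    unfolding c_def d_def by (simp_all add: forms.linear_construct E(1))
  interpret c: Vector_Spaces.linear "(*s) :: 'a \<Rightarrow> 'a^'n \<Rightarrow> 'a^'n" "(*)" c by (rule lin(1))
  interpret d: Vector_Spaces.linear "(*s) :: 'a \<Rightarrow> 'a^'n \<Rightarrow> 'a^'n" "(*)" d by (rule lin(2))
  have on_E: "c e1 = 1" "c e2 = 0" "d e1 = 0" "d e2 = 1" "\<forall>b\<in>B. c b = 0 \<and> d b = 0"
    using B(2-4) unfolding c_def d_def by (auto simp: forms.construct_basis[OF E(1)])
  have on_P: "c x = 0 \<and> d x = 0" if "x \<in> P" for x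
    using c.eq_0_on_span d.eq_0_on_span on_E(5) that B(1) by blast
  show thesis
  proof (rule that[OF lin])
    fix x
    show "x \<in> P \<longleftrightarrow> c x = 0 \<and> d x = 0"
    proof
      assume x: "c x = 0 \<and> d x = 0"
      have "x \<in> vec.span (insert e1 (insert e2 B))" using E(2) by simp
      then obtain k l where p: "x - k *s e1 - l *s e2 \<in> P"
        using B(1) by (auto simp: vec.span_breakdown_eq diff_diff_eq)
      have "c (x - k *s e1 - l *s e2) = - k" "d (x - k *s e1 - l *s e2) = - l"
        using x on_E by (simp_all add: c.diff c.scale d.diff d.scale)
      then have "k = 0" "l = 0" using on_P[OF p] by simp_all
      then show "x \<in> P" using p by simp
    qed (rule on_P)
  qed
qed

lemma proportional_on_subspace_if_sum_neq_UNIV: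
  fixes c d :: "'a::field^'n \<Rightarrow> 'a"
  assumes "linear_form c" "linear_form d" and P: "\<And>x. x \<in> P \<longleftrightarrow> c x = 0 \<and> d x = 0"
    and "vec.subspace T" and "{a + b |a b. a \<in> T \<and> b \<in> P} \<noteq> UNIV"
    and "x \<in> T" "y \<in> T"
  shows "c x * d y = d x * c y"
proof (rule ccontr)
  interpret c: Vector_Spaces.linear "(*s) :: 'a \<Rightarrow> 'a^'n \<Rightarrow> 'a^'n" "(*)" c by fact
  interpret d: Vector_Spaces.linear "(*s) :: 'a \<Rightarrow> 'a^'n \<Rightarrow> 'a^'n" "(*)" d by fact
  define \<delta> where "\<delta> = c x * d y - d x * c y"
  assume "c x * d y \<noteq> d x * c y"
  then have "\<delta> \<noteq> 0" unfolding \<delta>_def by simp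
  have "z \<in> {a + b |a b. a \<in> T \<and> b \<in> P}" for z
  proof -
    \<comment> \<open>Cramer's rule\<close>
    define \<alpha> where "\<alpha> = (c z * d y - d z * c y) / \<delta>"
    define \<beta> where "\<beta> = (c x * d z - d x * c z) / \<delta>"
    define p where "p = z - \<alpha> *s x - \<beta> *s y"
    have \<alpha>\<beta>: "\<delta> * \<alpha> = c z * d y - d z * c y" "\<delta> * \<beta> = c x * d z - d x * c z"
      using \<open>\<delta> \<noteq> 0\<close> by (simp_all add: \<alpha>_def \<beta>_def)
    have "\<delta> * f p = \<delta> * f z - (c z * d y - d z * c y) * f x - (c x * d z - d x * c z) * f y"
      if "linear_form f" for f
    proof -
      interpret f: Vector_Spaces.linear "(*s) :: 'a \<Rightarrow> 'a^'n \<Rightarrow> 'a^'n" "(*)" f by fact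
      show ?thesis unfolding p_def f.diff f.scale \<alpha>\<beta>[symmetric] by (simp add: algebra_simps)
    qed
    from this[OF assms(1)] this[OF assms(2)] have "\<delta> * c p = 0" "\<delta> * d p = 0"
      by (simp_all add: \<delta>_def algebra_simps)
    then have "p \<in> P" using P \<open>\<delta> \<noteq> 0\<close> by simp
    moreover have "\<alpha> *s x + \<beta> *s y \<in> T"
      using assms(4,6,7) vec.subspace_add vec.subspace_scale by blast
    moreover have "z = (\<alpha> *s x + \<beta> *s y) + p" by (simp add: p_def)
    ultimately show ?thesis by blast
  qed
  with assms(5) show False by blast
qed

lemma mem_span_insert_if_proportional:
  fixes c d :: "'a::field^'n \<Rightarrow> 'a"
  assumes "linear_form c" "linear_form d" and P: "\<And>x. x \<in> P \<longleftrightarrow> c x = 0 \<and> d x = 0"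
    and w: "c w \<noteq> 0 \<or> d w \<noteq> 0" and "c w * d x = d w * c x"
  shows "x \<in> vec.span (insert w P)"
proof -
  interpret c: Vector_Spaces.linear "(*s) :: 'a \<Rightarrow> 'a^'n \<Rightarrow> 'a^'n" "(*)" c by fact
  interpret d: Vector_Spaces.linear "(*s) :: 'a \<Rightarrow> 'a^'n \<Rightarrow> 'a^'n" "(*)" d by fact
  define k where "k = (if c w \<noteq> 0 then c x / c w else d x / d w)"
  have "c (x - k *s w) = 0 \<and> d (x - k *s w) = 0"
    using w assms(5) by (auto simp: c.diff c.scale d.diff d.scale k_def field_simps)
  then have "x - k *s w \<in> vec.span P" using P vec.span_base by blast
  then show ?thesis using vec.span_breakdown_eq by blast
qed

lemma sum_neq_UNIV_if_proj_planes_meet_in_line: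
  assumes "proj_plane T" "proj_plane P" "proj_line (T \<inter> P)"
  shows "{a + b |a b. a \<in> T \<and> b \<in> P} \<noteq> UNIV"
proof
  assume "{a + b |a b. a \<in> T \<and> b \<in> P} = UNIV"
  moreover have "vec.dim {a + b |a b. a \<in> T \<and> b \<in> P} + vec.dim (T \<inter> P) = vec.dim T + vec.dim P"
    using assms by (intro vec.dim_sums_Int) (auto simp: proj_plane_def)
  ultimately show False
    using assms vec_dim_card[where 'a=complex and 'n=5] by (simp add: proj_plane_def proj_line_def)
qed

lemma proj_hyperplane_span_insert:
  assumes "proj_plane P" "w \<notin> P"
  shows "proj_hyperplane (vec.span (insert w P))"
proof -
  have "vec.span P = P" using assms(1) by (simp add: proj_plane_def vec.span_eq_iff)
  with assms(2) have "w \<notin> vec.span P" by metis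
  then show ?thesis
    using assms(1) by (simp add: proj_plane_def proj_hyperplane_def vec.dim_insert vec.subspace_span)
qed

lemma has_field_derivative_vderiv_component:
  assumes "holo_curve g U" "open U" "t \<in> U"
  shows "((\<lambda>s. g s $ i) has_field_derivative vderiv g t $ i) (at t)"
  using assms unfolding holo_curve_def vderiv_def by (auto intro: holomorphic_derivI)

lemma has_field_derivative_linear_form_comp:
  fixes c :: "complex^'n \<Rightarrow> complex"
  assumes "linear_form c" "holo_curve g U" "open U" "t \<in> U"
  shows "((\<lambda>s. c (g s)) has_field_derivative c (vderiv g t)) (at t)"
proof -
  interpret c: Vector_Spaces.linear "(*s) :: complex \<Rightarrow> complex^'n \<Rightarrow> complex^'n" "(*)" c by fact
  have expand: "c x = (\<Sum>j\<in>UNIV. x $ j * c (axis j 1))" for x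
  proof -
    have "c x = c (\<Sum>j\<in>UNIV. x $ j *s axis j 1)" by (simp only: basis_expansion)
    then show ?thesis by (simp add: c.sum c.scale)
  qed
  have "(\<lambda>s. c (g s)) = (\<lambda>s. \<Sum>j\<in>UNIV. g s $ j * c (axis j 1))"
    by (rule ext) (rule expand)
  moreover have "c (vderiv g t) = (\<Sum>j\<in>UNIV. vderiv g t $ j * c (axis j 1))"
    by (rule expand)
  moreover have "((\<lambda>s. \<Sum>j\<in>UNIV. g s $ j * c (axis j 1)) has_field_derivative
      (\<Sum>j\<in>UNIV. vderiv g t $ j * c (axis j 1))) (at t)"
    by (intro DERIV_sum DERIV_cmult_right has_field_derivative_vderiv_component[OF assms(2-4)])
  ultimately show ?thesis by (simp only:)
qed

lemma vderiv_in_subspace: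
  fixes g :: "complex \<Rightarrow> complex^'n"
  assumes "vec.subspace H" "open U" "holo_curve g U" "\<forall>s\<in>U. g s \<in> H" "t \<in> U"
  shows "vderiv g t \<in> H"
proof (rule Lim_in_closed_set)
  have "r *\<^sub>R x = complex_of_real r *s x" for r and x :: "complex^'n"
    unfolding vec_eq_iff vector_scaleR_component by (simp add: scaleR_conv_of_real)
  then have "subspace H"
    using assms(1) unfolding subspace_def vec.subspace_def by metis
  then show "closed H" by (rule closed_subspace)
  show "\<forall>\<^sub>F s in at t. (1 / (s - t)) *s (g s - g t) \<in> H"
    using eventually_at_in_open'[OF assms(2,5)]
    by eventually_elim (use assms(1,4,5) in \<open>auto intro: vec.subspace_diff vec.subspace_scale\<close>)
  show "at t \<noteq> bot" by simp
  show "((\<lambda>s. (1 / (s - t)) *s (g s - g t)) \<longlongrightarrow> vderiv g t) (at t)"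
  proof (rule vec_tendstoI)
    fix i
    from has_field_derivative_vderiv_component[OF assms(3,2,5)]
    show "((\<lambda>s. ((1 / (s - t)) *s (g s - g t)) $ i) \<longlongrightarrow> vderiv g t $ i) (at t)"
      by (simp add: has_field_derivative_iff diff_divide_distrib)
  qed
qed

lemma proportional_near_if_wronskian_eq_0:
  fixes A B :: "complex \<Rightarrow> complex"
  assumes "open U" and hol: "A holomorphic_on U" "B holomorphic_on U"
    and W: "\<And>t. t \<in> U \<Longrightarrow> A t * deriv B t = B t * deriv A t"
    and "t0 \<in> U" "A t0 \<noteq> 0"
  obtains r where "r > 0" "ball t0 r \<subseteq> U" "\<And>s. s \<in> ball t0 r \<Longrightarrow> A t0 * B s = B t0 * A s"
proof -
  obtain r where r: "r > 0" "ball t0 r \<subseteq> U" "\<forall>s\<in>ball t0 r. A s \<noteq> 0"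
  proof -
    obtain \<epsilon> where "\<epsilon> > 0" "\<forall>s. dist t0 s < \<epsilon> \<longrightarrow> A s \<noteq> 0"
      using continuous_on_open_avoid[OF holomorphic_on_imp_continuous_on[OF hol(1)]] assms(1,5,6)
      by blast
    moreover obtain \<rho> where "\<rho> > 0" "ball t0 \<rho> \<subseteq> U"
      using assms(1,5) open_contains_ball by blast
    ultimately show thesis by (intro that[of "min \<epsilon> \<rho>"]) auto
  qed
  have "\<exists>k. \<forall>s\<in>ball t0 r. B s / A s = k"
  proof (rule has_field_derivative_zero_constant)
    fix s assume s: "s \<in> ball t0 r"
    with r(2) have "s \<in> U" by blast
    have "((\<lambda>s. B s / A s) has_field_derivative
        (deriv B s * A s - B s * deriv A s) / (A s * A s)) (at s)"
      using holomorphic_derivI[OF hol(2) assms(1) \<open>s \<in> U\<close>]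
        holomorphic_derivI[OF hol(1) assms(1) \<open>s \<in> U\<close>] r(3) s
      by (intro DERIV_divide) auto
    then show "((\<lambda>s. B s / A s) has_field_derivative 0) (at s within ball t0 r)"
      using W[OF \<open>s \<in> U\<close>] by (simp add: has_field_derivative_at_within mult.commute)
  qed simp
  then obtain k where k: "\<And>s. s \<in> ball t0 r \<Longrightarrow> B s = k * A s"
    using r(3) by (metis divide_eq_eq)
  show thesis
    using k k[of t0] r(1,2) by (intro that[of r]) auto
qed

lemma proportional_if_wronskian_eq_0:
  fixes A B :: "complex \<Rightarrow> complex"
  assumes U: "open U" "connected U" and hol: "A holomorphic_on U" "B holomorphic_on U"
    and W: "\<And>t. t \<in> U \<Longrightarrow> A t * deriv B t = B t * deriv A t"
    and "t0 \<in> U" "A t0 \<noteq> 0 \<or> B t0 \<noteq> 0" "t \<in> U"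
  shows "A t0 * B t = B t0 * A t"
proof -
  obtain r where "r > 0" "ball t0 r \<subseteq> U" "\<And>s. s \<in> ball t0 r \<Longrightarrow> A t0 * B s = B t0 * A s"
  proof (cases "A t0 = 0")
    case True
    have "\<And>t. t \<in> U \<Longrightarrow> B t * deriv A t = A t * deriv B t" using W by simp
    with True assms(6,7) show thesis
      using proportional_near_if_wronskian_eq_0[OF U(1) hol(2,1)] that by (metis mult.commute)
  qed (use proportional_near_if_wronskian_eq_0[OF U(1) hol W] assms(6) in blast)
  moreover have "(\<lambda>s. A t0 * B s) holomorphic_on U" "(\<lambda>s. B t0 * A s) holomorphic_on U"
    using hol by (auto intro: holomorphic_intros)
  ultimately show ?thesis
    using analytic_continuation_open[of "ball t0 r" U _ _ t] U \<open>t \<in> U\<close> by auto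
qed

lemma exists_proportionality_witness:
  fixes c d :: "complex^'n \<Rightarrow> complex"
  assumes lin: "linear_form c" "linear_form d" and P: "\<And>x. x \<in> P \<longleftrightarrow> c x = 0 \<and> d x = 0"
    and U: "open U" "connected U" "U \<noteq> {}" and "holo_curve g U"
    and gT: "\<And>t. t \<in> U \<Longrightarrow> g t \<in> T t \<and> vderiv g t \<in> T t"
    and proportional: "\<And>t x y. t \<in> U \<Longrightarrow> x \<in> T t \<Longrightarrow> y \<in> T t \<Longrightarrow> c x * d y = d x * c y"
    and not_sub: "\<And>t. t \<in> U \<Longrightarrow> \<not> T t \<subseteq> P"
  obtains t0 w where "t0 \<in> U" "w \<in> T t0" "w \<notin> P" "\<And>t. t \<in> U \<Longrightarrow> c w * d (g t) = d w * c (g t)"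
proof (cases "\<forall>t\<in>U. g t \<in> P")
  case True
  obtain t1 where "t1 \<in> U" using U(3) by blast
  moreover obtain w where "w \<in> T t1" "w \<notin> P" using not_sub[OF \<open>t1 \<in> U\<close>] by blast
  ultimately show thesis using True P by (intro that) auto
next
  case False
  then obtain t0 where "t0 \<in> U" "g t0 \<notin> P" by blast
  define A where "A s = c (g s)" for s
  define B where "B s = d (g s)" for s
  have A': "(A has_field_derivative c (vderiv g t)) (at t)"
    and B': "(B has_field_derivative d (vderiv g t)) (at t)" if "t \<in> U" for t
    unfolding A_def B_def using has_field_derivative_linear_form_comp lin assms(7) U(1) that by blast+
  have "A holomorphic_on U" "B holomorphic_on U"
    using A' B' U(1) holomorphic_on_open by blast+
  moreover have "A t * deriv B t = B t * deriv A t" if "t \<in> U" for t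
    using proportional[OF that] gT[OF that] DERIV_imp_deriv[OF A'[OF that]] DERIV_imp_deriv[OF B'[OF that]]
    unfolding A_def B_def by simp
  moreover have "A t0 \<noteq> 0 \<or> B t0 \<noteq> 0" using P \<open>g t0 \<notin> P\<close> unfolding A_def B_def by simp
  ultimately show thesis
    using proportional_if_wronskian_eq_0[OF U(1,2)] \<open>t0 \<in> U\<close> \<open>g t0 \<notin> P\<close> gT
    unfolding A_def B_def by (intro that) blast+
qed

definition developable ::
    "(complex \<Rightarrow> complex^5) \<Rightarrow> complex set \<Rightarrow> (complex^5) set \<Rightarrow> (complex \<Rightarrow> (complex^5) set) \<Rightarrow> bool"
  where "developable g U S T \<longleftrightarrow>
    (S = tdev_surface g U \<and> (\<forall>t\<in>U. T t = tdev_tplane g t)) \<or>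
    (\<exists>v. S = cone_surface v g U \<and> (\<forall>t\<in>U. T t = cone_tplane v g t))"

lemma developable_tangent_in_tplane:
  assumes "developable g U S T" "t \<in> U"
  shows "g t \<in> T t \<and> vderiv g t \<in> T t"
  using assms by (auto simp: developable_def tdev_tplane_def cone_tplane_def intro: vec.span_base)

lemma developable_subset_subspace:
  assumes dev: "developable g U S T" and "vec.subspace H" "open U" "holo_curve g U"
    and g: "\<forall>t\<in>U. g t \<in> H" and "t0 \<in> U" "T t0 \<subseteq> H"
  shows "S \<subseteq> H"
  using dev unfolding developable_def
proof (elim disjE exE conjE)
  assume S: "S = tdev_surface g U"
  have "vderiv g t \<in> H" if "t \<in> U" for t
    using vderiv_in_subspace assms(2-4) g that by blast
  then show "S \<subseteq> H"
    using g assms(2) unfolding S tdev_surface_def by (intro UN_least vec.span_minimal) auto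
next
  fix v assume S: "S = cone_surface v g U" and "\<forall>t\<in>U. T t = cone_tplane v g t"
  then have "v \<in> T t0"
    using \<open>t0 \<in> U\<close> by (auto simp: cone_tplane_def intro: vec.span_base)
  then show "S \<subseteq> H"
    using g assms(2,7) unfolding S cone_surface_def by (intro UN_least vec.span_minimal) auto
qed

theorem mainTheorem3:
  fixes g :: "complex \<Rightarrow> complex^5" and U :: "complex set"
    and S :: "(complex^5) set" and T :: "complex \<Rightarrow> (complex^5) set"
    and P :: "(complex^5) set"
  assumes "open U" and "connected U" and "U \<noteq> {}"
    and "holo_curve g U"
    and "(S = tdev_surface g U \<and> (\<forall>t\<in>U. T t = tdev_tplane g t))
         \<or> (\<exists>v. S = cone_surface v g U \<and> (\<forall>t\<in>U. T t = cone_tplane v g t))"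
    and "\<forall>t\<in>U. proj_plane (T t)"
    and "\<not> (\<exists>Q. proj_plane Q \<and> S \<subseteq> Q)"
    and "proj_plane P"
    and "\<forall>t\<in>U. proj_line (T t \<inter> P)"
  shows "\<exists>H. proj_hyperplane H \<and> P \<subseteq> H \<and> S \<subseteq> H"
proof -
  have dev: "developable g U S T" using assms(5) unfolding developable_def .
  obtain c d where lin: "linear_form c" "linear_form d" and P: "\<And>x. x \<in> P \<longleftrightarrow> c x = 0 \<and> d x = 0"
    using codim2_subspace_eq_common_kernel[of P] assms(8) by (auto simp: proj_plane_def)
  have proportional: "c x * d y = d x * c y" if "t \<in> U" "x \<in> T t" "y \<in> T t" for t x y
    using proportional_on_subspace_if_sum_neq_UNIV[OF lin P _ sum_neq_UNIV_if_proj_planes_meet_in_line]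
      assms(6,8,9) that by (auto simp: proj_plane_def)
  have not_sub: "\<not> T t \<subseteq> P" if "t \<in> U" for t
    using assms(6,9) that by (auto simp: proj_plane_def proj_line_def Int_absorb2)
  obtain t0 w where "t0 \<in> U" "w \<in> T t0" "w \<notin> P" and gw: "\<And>t. t \<in> U \<Longrightarrow> c w * d (g t) = d w * c (g t)"
    by (rule exists_proportionality_witness[OF lin P assms(1-4), of T])
      (use developable_tangent_in_tplane[OF dev] proportional not_sub in blast)+
  define H where "H = vec.span (insert w P)"
  have w: "c w \<noteq> 0 \<or> d w \<noteq> 0" using P \<open>w \<notin> P\<close> by blast
  have "\<forall>t\<in>U. g t \<in> H" "T t0 \<subseteq> H"
    using mem_span_insert_if_proportional[OF lin P w] gw proportional \<open>t0 \<in> U\<close> \<open>w \<in> T t0\<close>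
    unfolding H_def by blast+
  then have "S \<subseteq> H"
    using developable_subset_subspace[OF dev _ assms(1,4)] \<open>t0 \<in> U\<close> unfolding H_def by blast
  then show ?thesis
    using proj_hyperplane_span_insert[OF assms(8) \<open>w \<notin> P\<close>] vec.span_superset unfolding H_def by blast
qed

end
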